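(* For all $n\in\mathbb N$, \[ \max\Big\{|\alpha(n,0)|,\ |\alpha(n,1)|,\ \sum_{s=2}^\infty|\alpha(n,s)|\Big\}\le\frac1N\Big(1+\frac6N\Big)^{n-1}. \]
   Context: $E$ is a finite set with $N=\#E>8$ elements; $Q$ is an irreducible stochastic matrix on $E$ with $Q(x,y)=Q(y,x)$ for all $x,y$ and $\mathrm{tr}(Q)=0$. The function $\alpha:\mathbb Z_+\times\mathbb Z_+\to\mathbb R$ is defined by $\alpha(0,s)=0$ for all $s$ and, for $n\in\mathbb Z_+$, $\alpha(n+1,0)=\frac2{N^2}+\alpha(n,0)+\frac2{N^2}\sum_{s\ge1}\alpha(n,s)\mathrm{tr}(Q^s)$, $\alpha(n+1,1)=-\frac2{N^2}+\frac{N-2}N\alpha(n,1)-\frac2{N^2}\sum_{s\ge1}\alpha(n,s)\mathrm{tr}(Q^s)$, $\alpha(n+1,s)=\frac{N-2}N\alpha(n,s)+\frac2N\alpha(n,s-1)$ for $s\ge2$. *)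

theory Defs
  imports "HOL-Analysis.Analysis"
begin

primrec mpow :: "('e::finite \<Rightarrow> 'e \<Rightarrow> real) \<Rightarrow> nat \<Rightarrow> 'e \<Rightarrow> 'e \<Rightarrow> real" where
  "mpow Q 0 = (\<lambda>x y. if x = y then 1 else 0)"
| "mpow Q (Suc k) = (\<lambda>x y. \<Sum>z\<in>UNIV. Q x z * mpow Q k z y)"

definition mtrace :: "('e::finite \<Rightarrow> 'e \<Rightarrow> real) \<Rightarrow> real" where
  "mtrace A = (\<Sum>x\<in>UNIV. A x x)"

definition stochastic :: "('e::finite \<Rightarrow> 'e \<Rightarrow> real) \<Rightarrow> bool" where
  "stochastic Q \<longleftrightarrow> (\<forall>x y. 0 \<le> Q x y) \<and> (\<forall>x. (\<Sum>y\<in>UNIV. Q x y) = 1)"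

definition irreducible_mat :: "('e::finite \<Rightarrow> 'e \<Rightarrow> real) \<Rightarrow> bool" where
  "irreducible_mat Q \<longleftrightarrow> (\<forall>x y. \<exists>k. 0 < mpow Q k x y)"

text \<open>alpha_row N t n s = alpha(n,s), where t s = tr(Q^s).  The sum over s >= 1 in the
  recursion is taken over 1..n, since alpha(n,s) = 0 for s > n.\<close>

primrec alpha_row :: "real \<Rightarrow> (nat \<Rightarrow> real) \<Rightarrow> nat \<Rightarrow> nat \<Rightarrow> real" where
  "alpha_row N t 0 = (\<lambda>s. 0)"
| "alpha_row N t (Suc n) =
     (let a = alpha_row N t n; S = (\<Sum>s\<in>{1..n}. a s * t s) in
      (\<lambda>s. if s = 0 then 2 / N^2 + a 0 + 2 / N^2 * S
           else if s = 1 then - 2 / N^2 + (N - 2) / N * a 1 - 2 / N^2 * S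
           else (N - 2) / N * a s + 2 / N * a (s - 1)))"

definition alpha :: "('e::finite \<Rightarrow> 'e \<Rightarrow> real) \<Rightarrow> nat \<Rightarrow> nat \<Rightarrow> real" where
  "alpha Q n s = alpha_row (real CARD('e)) (\<lambda>k. mtrace (mpow Q k)) n s"

end

theory Submission
  imports Defs
begin

(* Write a = alpha(n,.), c = sum_{s>=2} |a s| (the tail mass) and
   M_n = (1/N)(1 + 6/N)^(n-1).  Since tr(Q) = 0 and 0 <= tr(Q^s) <= N, the trace
   pairing P = sum_{s>=1} a s tr(Q^s) satisfies |P| <= N c.  Feeding this into the
   recursion gives, whenever |a 0|, |a 1|, c <= M and M >= 1/N,
     |alpha(n+1,0)|, |alpha(n+1,1)| <= M + 4M/N   and   c' <= c + (2/N)|a 1| <= M + 2M/N,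
   so all three quantities grow at most by the factor 1 + 6/N per step.  Finally the facts about stochastic
   matrices supply these trace hypotheses and the series in the statement is
   identified with the finite tail mass. *)

lemma alpha_row_vanishes: "n < s \<Longrightarrow> alpha_row N t n s = 0"
  by (induction n arbitrary: s) (auto simp: Let_def)

definition trace_pairing :: "real \<Rightarrow> (nat \<Rightarrow> real) \<Rightarrow> nat \<Rightarrow> real" where
  "trace_pairing N t n = (\<Sum>s\<in>{1..n}. alpha_row N t n s * t s)"

definition tail_mass :: "real \<Rightarrow> (nat \<Rightarrow> real) \<Rightarrow> nat \<Rightarrow> real" where
  "tail_mass N t n = (\<Sum>s\<in>{2..n}. \<bar>alpha_row N t n s\<bar>)"

text \<open>The recursion, one equation per coordinate; these replace the raw defining
  equation, which is removed from the simp set so that it is not unfolded wholesale.\<close>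
lemma alpha_row_Suc_0:
  "alpha_row N t (Suc n) 0 = 2 / N^2 + alpha_row N t n 0 + 2 / N^2 * trace_pairing N t n"
  by (simp add: Let_def trace_pairing_def)

lemma alpha_row_Suc_1:
  "alpha_row N t (Suc n) 1
     = - 2 / N^2 + (N - 2) / N * alpha_row N t n 1 - 2 / N^2 * trace_pairing N t n"
  by (simp add: Let_def trace_pairing_def)

lemma alpha_row_Suc_ge2:
  "2 \<le> s \<Longrightarrow> alpha_row N t (Suc n) s
     = (N - 2) / N * alpha_row N t n s + 2 / N * alpha_row N t n (s - 1)"
  by (simp add: Let_def)

declare alpha_row.simps(2) [simp del]

text \<open>Since t 1 = tr(Q) = 0, only the tail enters the pairing, and |t s| <= N bounds it.\<close>
lemma trace_pairing_bound:
  assumes t1: "t 1 = 0" and t_le: "\<And>s. \<bar>t s\<bar> \<le> N"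
  shows "\<bar>trace_pairing N t n\<bar> \<le> N * tail_mass N t n"
proof (cases "n = 0")
  case True
  then show ?thesis using t_le[of 0] by (simp add: trace_pairing_def tail_mass_def)
next
  case False
  then have "trace_pairing N t n = (\<Sum>s\<in>{2..n}. alpha_row N t n s * t s)"
    using t1 by (simp add: trace_pairing_def sum.atLeast_Suc_atMost numeral_2_eq_2)
  also have "\<bar>\<dots>\<bar> \<le> (\<Sum>s\<in>{2..n}. \<bar>alpha_row N t n s\<bar> * N)"
    by (rule order_trans[OF sum_abs], rule sum_mono) (simp add: abs_mult mult_left_mono t_le)
  finally show ?thesis by (simp add: tail_mass_def sum_distrib_left mult.commute)
qed

lemma step_bound_0:
  fixes N M x P :: real
  assumes N: "0 < N" and M: "1 / N \<le> M" and x: "\<bar>x\<bar> \<le> M" and P: "\<bar>P\<bar> \<le> N * M"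
  shows "\<bar>2 / N^2 + x + 2 / N^2 * P\<bar> \<le> M * (1 + 6 / N)"
proof -
  have "\<bar>2 / N^2 + x + 2 / N^2 * P\<bar> \<le> 2 / N^2 + \<bar>x\<bar> + 2 / N^2 * \<bar>P\<bar>"
    using abs_triangle_ineq[of "2 / N^2 + x" "2 / N^2 * P"] abs_triangle_ineq[of "2 / N^2" x]
    by (simp add: abs_mult)
  moreover have "2 / N^2 \<le> 2 * (M / N)"
    using N M by (simp add: field_simps power2_eq_square)
  moreover have "2 / N^2 * \<bar>P\<bar> \<le> 2 * (M / N)"
    using N P by (simp add: field_simps power2_eq_square)
  moreover have "0 \<le> M / N" using N M by (simp add: order_trans[OF _ M])
  moreover have "M * (1 + 6 / N) = M + 6 * (M / N)" by (simp add: field_simps)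
  ultimately show ?thesis using x by linarith
qed

lemma step_bound_1:
  fixes N M x P :: real
  assumes N: "2 \<le> N" and M: "1 / N \<le> M" and x: "\<bar>x\<bar> \<le> M" and P: "\<bar>P\<bar> \<le> N * M"
  shows "\<bar>- 2 / N^2 + (N - 2) / N * x - 2 / N^2 * P\<bar> \<le> M * (1 + 6 / N)"
proof -
  have "\<bar>(N - 2) / N * x\<bar> = (N - 2) / N * \<bar>x\<bar>" using N by (simp add: abs_mult)
  also have "\<dots> \<le> 1 * \<bar>x\<bar>" using N by (intro mult_right_mono) auto
  finally have "\<bar>- ((N - 2) / N * x)\<bar> \<le> M" using x by (simp only: abs_minus_cancel)
  from step_bound_0[OF _ M this P] N
  have "\<bar>- (- 2 / N^2 + (N - 2) / N * x - 2 / N^2 * P)\<bar> \<le> M * (1 + 6 / N)"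
    by (simp add: algebra_simps)
  then show ?thesis by (simp only: abs_minus_cancel)
qed

text \<open>The tail: the shift s-1 -> s moves mass 2/N |alpha(n,1)| into the tail, and the
  remaining contributions only contract it.\<close>
lemma tail_mass_Suc:
  assumes N: "2 \<le> N"
  shows "tail_mass N t (Suc n) \<le> tail_mass N t n + 2 / N * \<bar>alpha_row N t n 1\<bar>"
proof -
  let ?a = "alpha_row N t n"
  have "tail_mass N t (Suc n)
      \<le> (\<Sum>s\<in>{2..Suc n}. (N - 2) / N * \<bar>?a s\<bar> + 2 / N * \<bar>?a (s - 1)\<bar>)"
    unfolding tail_mass_def
  proof (rule sum_mono)
    fix s assume "s \<in> {2..Suc n}"
    then show "\<bar>alpha_row N t (Suc n) s\<bar> \<le> (N - 2) / N * \<bar>?a s\<bar> + 2 / N * \<bar>?a (s - 1)\<bar>"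
      using N abs_triangle_ineq[of "(N - 2) / N * ?a s" "2 / N * ?a (s - 1)"]
      by (simp add: alpha_row_Suc_ge2 abs_mult)
  qed
  also have "\<dots> = (N - 2) / N * (\<Sum>s\<in>{2..Suc n}. \<bar>?a s\<bar>)
                   + 2 / N * (\<Sum>s\<in>{2..Suc n}. \<bar>?a (s - 1)\<bar>)"
    by (simp only: sum.distrib sum_distrib_left)
  also have "(\<Sum>s\<in>{2..Suc n}. \<bar>?a s\<bar>) = tail_mass N t n"
    by (simp add: tail_mass_def alpha_row_vanishes)
  also have "(\<Sum>s\<in>{2..Suc n}. \<bar>?a (s - 1)\<bar>) = (\<Sum>s\<in>{1..n}. \<bar>?a s\<bar>)"
    by (simp only: numeral_2_eq_2 One_nat_def[symmetric] sum.shift_bounds_cl_Suc_ivl) simp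
  also have "\<dots> = \<bar>?a 1\<bar> + tail_mass N t n"
    by (cases n) (simp_all add: tail_mass_def sum.atLeast_Suc_atMost numeral_2_eq_2)
  also have "(N - 2) / N * tail_mass N t n + 2 / N * (\<bar>?a 1\<bar> + tail_mass N t n)
             = tail_mass N t n + 2 / N * \<bar>?a 1\<bar>"
    using N by (simp add: field_simps)
  finally show ?thesis .
qed

text \<open>Row 1 is (2/N^2, -2/N^2, 0, ...), and each step
  multiplies the bound by at most 1 + 6/N.\<close>
lemma alpha_row_bound:
  fixes N :: real
  assumes N: "2 \<le> N" and t1: "t 1 = 0" and t_le: "\<And>s. \<bar>t s\<bar> \<le> N" and n: "1 \<le> n"
  defines "M \<equiv> \<lambda>n. 1 / N * (1 + 6 / N) ^ (n - 1)"
  shows "\<bar>alpha_row N t n 0\<bar> \<le> M n \<and> \<bar>alpha_row N t n 1\<bar> \<le> M n \<and> tail_mass N t n \<le> M n"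
  using n
proof (induction n rule: dec_induct)
  case base
  have "2 / N^2 \<le> 1 / N" using N by (simp add: field_simps power2_eq_square)
  then show ?case
    using alpha_row_Suc_0[of N t 0] alpha_row_Suc_1[of N t 0] N
    by (simp add: M_def trace_pairing_def tail_mass_def)
next
  case (step n)
  then have IH: "\<bar>alpha_row N t n 0\<bar> \<le> M n" "\<bar>alpha_row N t n 1\<bar> \<le> M n"
    "tail_mass N t n \<le> M n" by auto
  have M_ge: "1 / N \<le> M n"
    using N by (simp add: M_def one_le_power divide_le_eq)
  have M_nonneg: "0 \<le> M n" using N by (simp add: M_def)
  have M_Suc: "M (Suc n) = M n * (1 + 6 / N)"
    using step.hyps by (cases n) (auto simp: M_def)
  have "\<bar>trace_pairing N t n\<bar> \<le> N * tail_mass N t n"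
    using t1 t_le by (rule trace_pairing_bound)
  also have "\<dots> \<le> N * M n" using IH(3) N by (simp add: mult_left_mono)
  finally have pairing: "\<bar>trace_pairing N t n\<bar> \<le> N * M n" .
  have new_0: "\<bar>alpha_row N t (Suc n) 0\<bar> \<le> M (Suc n)"
    unfolding alpha_row_Suc_0 M_Suc using N by (intro step_bound_0[OF _ M_ge IH(1) pairing]) simp
  have new_1: "\<bar>alpha_row N t (Suc n) 1\<bar> \<le> M (Suc n)"
    unfolding alpha_row_Suc_1 M_Suc by (rule step_bound_1[OF N M_ge IH(2) pairing])
  have "tail_mass N t (Suc n) \<le> M n + 2 / N * M n"
    using tail_mass_Suc[OF N, of t n] IH(2,3) N
    by (smt (verit) divide_nonneg_nonneg mult_left_mono)
  also have "\<dots> \<le> M (Suc n)"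
    using M_nonneg N by (simp add: M_Suc field_simps)
  finally show ?case using new_0 new_1 by simp
qed

lemma stochastic_mpow:
  assumes "stochastic Q"
  shows "stochastic (mpow Q k)"
proof (induction k)
  case 0
  then show ?case by (simp add: stochastic_def)
next
  case (Suc k)
  have "(\<Sum>y\<in>UNIV. mpow Q (Suc k) x y) = (\<Sum>z\<in>UNIV. Q x z * (\<Sum>y\<in>UNIV. mpow Q k z y))" for x
    by (simp add: sum_distrib_left) (rule sum.swap)
  then show ?case
    using Suc assms unfolding stochastic_def by (auto intro!: sum_nonneg)
qed

text \<open>Entries of a stochastic matrix lie in [0,1], so its trace lies in [0,N].\<close>
lemma stochastic_entry_le_1:
  assumes "stochastic A"
  shows "A x y \<le> 1"
proof -
  have "A x y \<le> (\<Sum>y\<in>UNIV. A x y)"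
    using assms unfolding stochastic_def by (intro member_le_sum) auto
  then show ?thesis using assms unfolding stochastic_def by simp
qed

lemma stochastic_trace_bound:
  fixes A :: "'e::finite \<Rightarrow> 'e \<Rightarrow> real"
  assumes "stochastic A"
  shows "\<bar>mtrace A\<bar> \<le> real CARD('e)"
proof -
  have "0 \<le> mtrace A"
    using assms unfolding mtrace_def stochastic_def by (auto intro: sum_nonneg)
  moreover have "mtrace A \<le> (\<Sum>x\<in>(UNIV::'e set). 1)"
    unfolding mtrace_def by (intro sum_mono stochastic_entry_le_1[OF assms])
  ultimately show ?thesis by simp
qed

lemma mpow_1: "mpow Q 1 = Q"
  by (auto simp: fun_eq_iff mult.commute[of "Q _ _"] if_distrib cong: if_cong)

text \<open>Since row n vanishes beyond n, the series in the statement is the finite tail mass.\<close>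
lemma tail_mass_series: "(\<Sum>s. \<bar>alpha_row N t n (s + 2)\<bar>) = tail_mass N t n"
proof -
  have "(\<Sum>s. \<bar>alpha_row N t n (s + 2)\<bar>) = (\<Sum>s<n - 1. \<bar>alpha_row N t n (s + 2)\<bar>)"
    by (rule suminf_finite) (auto simp: alpha_row_vanishes)
  also have "\<dots> = (\<Sum>s\<in>{2..n}. \<bar>alpha_row N t n s\<bar>)"
    by (rule sum.reindex_bij_witness[of _ "\<lambda>s. s - 2" "\<lambda>s. s + 2"]) auto
  finally show ?thesis by (simp add: tail_mass_def)
qed

theorem lemma3p4:
  fixes Q :: "'e::finite \<Rightarrow> 'e \<Rightarrow> real" and n :: nat
  assumes "CARD('e) > 8"
    and "stochastic Q" and "irreducible_mat Q"
    and "\<And>x y. Q x y = Q y x"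
    and "mtrace Q = 0"
  shows "max (max \<bar>alpha Q n 0\<bar> \<bar>alpha Q n 1\<bar>) (\<Sum>s. \<bar>alpha Q n (s + 2)\<bar>)
           \<le> 1 / real CARD('e) * (1 + 6 / real CARD('e)) powr (real n - 1)"
proof -
  define N where "N = real CARD('e)"
  define t where "t = (\<lambda>k. mtrace (mpow Q k))"
  have N: "2 \<le> N" using assms(1) by (simp add: N_def)
  then have growth_pos: "0 < 1 + 6 / N" by (simp add: add_pos_nonneg)
  have t1: "t 1 = 0" unfolding t_def mpow_1 by (rule assms(5))
  have t_le: "\<bar>t s\<bar> \<le> N" for s
    unfolding t_def N_def by (rule stochastic_trace_bound[OF stochastic_mpow[OF assms(2)]])
  have alpha_eq: "alpha Q n = alpha_row N t n" by (simp add: fun_eq_iff alpha_def N_def t_def)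
  have series: "(\<Sum>s. \<bar>alpha Q n (s + 2)\<bar>) = tail_mass N t n"
    unfolding alpha_eq by (rule tail_mass_series)
  show ?thesis
  proof (cases "n = 0")
    case True
    then have "alpha Q n = (\<lambda>s. 0)" by (simp add: alpha_def fun_eq_iff)
    moreover have "0 < 1 / N * (1 + 6 / N) powr (real n - 1)"
      using N growth_pos by simp
    ultimately show ?thesis by (simp add: N_def)
  next
    case False
    then have "real n - 1 = real (n - 1)" by (simp add: of_nat_diff)
    then have "(1 + 6 / N) powr (real n - 1) = (1 + 6 / N) ^ (n - 1)"
      using growth_pos by (simp only: powr_realpow)
    then show ?thesis
      using alpha_row_bound[of N t n, OF N t1 t_le] False
      unfolding N_def[symmetric] series by (simp add: alpha_eq)
  qed
qed

end
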